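(* Let $\mathcal{W}\subseteq\{x\in\mathbb{R}^d:\|x\|_2\le 1\}$ be closed and convex with $0\in\mathcal{W}$, let $L>0$, and let $f_1,\dots,f_T$ be convex differentiable functions whose gradients are $L$-Lipschitz on $\mathcal{W}$: $\|\nabla f_t(x)-\nabla f_t(x')\|_2\le L\|x-x'\|_2$. Set $f_0\equiv 0$ and $z_0=0$, fix $\eta\in(0,1]$, and for $t=1,\dots,T$ define $$x_t=\arg\min_{x\in\mathcal{W}}\Bigl\{\langle x,\nabla f_{t-1}(z_{t-1})\rangle+\tfrac{L}{2\eta}\|x-z_{t-1}\|_2^2\Bigr\},\qquad z_t=\arg\min_{x\in\mathcal{W}}\Bigl\{\Bigl\langle x,\sum_{\tau=1}^t\nabla f_\tau(z_{\tau-1})\Bigr\rangle+\tfrac{L}{2\eta}\|x\|_2^2\Bigr\}.$$ Then $$\sum_{t=1}^T f_t(x_t)\le\min_{x\in\mathcal{W}}\Bigl[\tfrac{L}{2\eta}\|x\|_2^2+\sum_{t=1}^T\bigl(f_t(z_{t-1})+\langle x-z_{t-1},\nabla f_t(z_{t-1})\rangle\bigr)\Bigr]+\frac{\eta}{2L}\sum_{t=0}^{T-1}\|\nabla f_{t+1}(z_t)-\nabla f_t(z_t)\|_2^2.$$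
   Context: The iterates $x_t$ (decisions) and $z_t$ (search points) constitute the "improved follow-the-regularized-leader" (IFTRL) algorithm for online convex optimization: $x_t$ is played before $f_t$ is revealed, then $z_t$ is computed. *)

theory Defs
  imports "HOL-Analysis.Analysis"
begin

end

theory Submission
  imports Defs
begin

(* Write a = L/(2 eta) and let F_n(u) = a|u|^2 + sum_{t<=n} [f_t(z_{t-1}) + <u - z_{t-1}, g_t(z_{t-1})>]
   be the linearized FTRL objective after n rounds, so that z_n minimizes F_n over W.
   The proof is a potential argument with potential F_n(z_n):

     f_{n+1}(x_{n+1}) <= F_{n+1}(z_{n+1}) - F_n(z_n) + eta/(2L) |g_{n+1}(z_n) - g_n(z_n)|^2.

   This one-step inequality combines the descent lemma for L-smooth functions, the first-order
   optimality (variational) conditions of the two quadratic problems defining x_{n+1} and z_{n+1},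
   and Young's inequality.  Summing it telescopes to F_T(z_T) plus the error terms, and
   F_T(z_T) is the infimum of F_T over W. *)

lemma convex_segment_point:
  fixes W :: "'a::real_vector set"
  assumes "convex W" "x \<in> W" "z \<in> W" "0 \<le> s" "s \<le> 1"
  shows "z + s *\<^sub>R (x - z) \<in> W"
proof -
  have "(1 - s) *\<^sub>R z + s *\<^sub>R x \<in> W" using convexD_alt[OF assms(1,3,2,4,5)] .
  moreover have "(1 - s) *\<^sub>R z + s *\<^sub>R x = z + s *\<^sub>R (x - z)" by (simp add: algebra_simps)
  ultimately show ?thesis by simp
qed

lemma smooth_descent:
  fixes f :: "'a::real_inner \<Rightarrow> real" and g :: "'a \<Rightarrow> 'a"
  assumes deriv: "\<And>y. y \<in> W \<Longrightarrow> (f has_derivative (\<lambda>h. g y \<bullet> h)) (at y)"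
    and lip: "\<And>y y'. y \<in> W \<Longrightarrow> y' \<in> W \<Longrightarrow> norm (g y - g y') \<le> L * norm (y - y')"
    and W: "convex W" and xW: "x \<in> W" and zW: "z \<in> W"
  shows "f x \<le> f z + g z \<bullet> (x - z) + L / 2 * (norm (x - z))\<^sup>2"
proof -
  define d where "d = x - z"
  have seg: "z + s *\<^sub>R d \<in> W" if "0 \<le> s" "s \<le> 1" for s
    using convex_segment_point[OF W xW zW that] by (simp add: d_def)
  define \<phi> where "\<phi> s = f (z + s *\<^sub>R d) - s * (g z \<bullet> d) - L / 2 * s\<^sup>2 * (norm d)\<^sup>2" for s
  have \<phi>_deriv: "DERIV \<phi> s :> g (z + s *\<^sub>R d) \<bullet> d - g z \<bullet> d - L * s * (norm d)\<^sup>2"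
    if "0 \<le> s" "s \<le> 1" for s
  proof -
    have "((\<lambda>s. z + s *\<^sub>R d) has_derivative (\<lambda>h. h *\<^sub>R d)) (at s)"
      by (auto intro!: derivative_eq_intros)
    from has_derivative_compose[OF this deriv[OF seg[OF that]]]
    have "((\<lambda>s. f (z + s *\<^sub>R d)) has_derivative (\<lambda>h. g (z + s *\<^sub>R d) \<bullet> d * h)) (at s)"
      by (simp add: mult.commute)
    then have "DERIV (\<lambda>s. f (z + s *\<^sub>R d)) s :> g (z + s *\<^sub>R d) \<bullet> d"
      by (simp add: has_field_derivative_def)
    then show ?thesis unfolding \<phi>_def by (auto intro!: derivative_eq_intros)
  qed
  have "\<phi> 1 \<le> \<phi> 0"
  proof (rule DERIV_nonpos_imp_nonincreasing[of 0 1])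
    fix s :: real assume s: "0 \<le> s" "s \<le> 1"
    have "g (z + s *\<^sub>R d) \<bullet> d - g z \<bullet> d = (g (z + s *\<^sub>R d) - g z) \<bullet> d"
      by (simp add: inner_diff_left)
    also have "\<dots> \<le> norm (g (z + s *\<^sub>R d) - g z) * norm d" by (rule norm_cauchy_schwarz)
    also have "\<dots> \<le> L * norm (s *\<^sub>R d) * norm d"
      using lip[OF seg[OF s] zW] by (simp add: mult_right_mono)
    also have "\<dots> = L * s * (norm d)\<^sup>2" using s by (simp add: power2_eq_square)
    finally show "\<exists>y. DERIV \<phi> s :> y \<and> y \<le> 0" using \<phi>_deriv[OF s] by force
  qed simp
  then show ?thesis unfolding \<phi>_def d_def by (simp add: inner_commute)
qed

lemma quadratic_min_variational:
  fixes W :: "'a::real_inner set"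
  assumes W: "convex W" and pW: "p \<in> W" and a: "a > 0"
    and min: "\<And>y. y \<in> W \<Longrightarrow> p \<bullet> G + a * (norm (p - c))\<^sup>2 \<le> y \<bullet> G + a * (norm (y - c))\<^sup>2"
    and yW: "y \<in> W"
  shows "0 \<le> (y - p) \<bullet> (G + (2 * a) *\<^sub>R (p - c))"
proof (rule ccontr)
  define d where "d = y - p"
  define \<delta> where "\<delta> = (y - p) \<bullet> (G + (2 * a) *\<^sub>R (p - c))"
  assume "\<not> ?thesis"
  then have \<delta>_neg: "\<delta> < 0" by (simp add: \<delta>_def)
  \<comment> \<open>a small step \<open>s\<close> from \<open>p\<close> towards \<open>y\<close> decreases the objective\<close>
  define s where "s = min 1 (- \<delta> / (a * (d \<bullet> d) + 1))"
  have den: "a * (d \<bullet> d) + 1 > 0" using a by (simp add: add_nonneg_pos)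
  have s0: "s > 0" using \<delta>_neg den by (simp add: s_def divide_neg_pos)
  have "s \<le> - \<delta> / (a * (d \<bullet> d) + 1)" by (simp add: s_def)
  then have "s * (a * (d \<bullet> d) + 1) \<le> - \<delta>" using den by (simp add: field_simps)
  then have small: "a * s * (d \<bullet> d) < - \<delta>" using s0 by (simp add: algebra_simps)
  have qW: "p + s *\<^sub>R d \<in> W"
    using convex_segment_point[OF W yW pW] s0 by (simp add: d_def s_def)
  have expand: "(p + s *\<^sub>R d) \<bullet> G + a * (norm (p + s *\<^sub>R d - c))\<^sup>2
       = p \<bullet> G + a * (norm (p - c))\<^sup>2 + s * (\<delta> + a * s * (d \<bullet> d))"
    unfolding \<delta>_def d_def power2_norm_eq_inner
    by (simp add: inner_simps algebra_simps power2_eq_square inner_commute)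
  have "s * (\<delta> + a * s * (d \<bullet> d)) < 0" using s0 small by (simp add: mult_pos_neg)
  with min[OF qW] expand show False by linarith
qed

lemma inner_young:
  fixes u v :: "'a::real_inner"
  assumes k: "k > 0"
  shows "u \<bullet> v \<le> k / 2 * (norm u)\<^sup>2 + 1 / (2 * k) * (norm v)\<^sup>2"
proof -
  have "0 \<le> (k * norm u - norm v)\<^sup>2" by simp
  then have "2 * k * (norm u * norm v) \<le> k\<^sup>2 * (norm u)\<^sup>2 + (norm v)\<^sup>2"
    by (simp add: power2_eq_square algebra_simps)
  then have "norm u * norm v \<le> k / 2 * (norm u)\<^sup>2 + 1 / (2 * k) * (norm v)\<^sup>2"
    using k by (simp add: field_simps power2_eq_square)
  then show ?thesis using norm_cauchy_schwarz[of u v] by linarith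
qed

text \<open>The one-step inequality of IFTRL, for arbitrary vectors.  \<open>zp\<close> is the previous search
  point with tangent data \<open>fz\<close>, \<open>c\<close> (hypothesis \<open>smooth\<close>, from the descent lemma), \<open>x\<close> is the
  decision computed with the predicted gradient \<open>m\<close> and \<open>zt\<close> the new search point; \<open>opt_x\<close>
  and \<open>opt_z\<close> are the variational inequalities of the two quadratic problems, whose FTRL
  part is \<open>Q u = u \<bullet> G + a |u|\<^sup>2\<close>.\<close>
lemma iftrl_one_step:
  fixes x zt zp c m G :: "'a::real_inner"
  assumes L: "0 < L" and \<eta>: "0 < \<eta>" "\<eta> \<le> 1" and a: "a = L / (2 * \<eta>)"
    and smooth: "fx \<le> fz + c \<bullet> (x - zp) + L / 2 * (norm (x - zp))\<^sup>2"
    and opt_x: "0 \<le> (zt - x) \<bullet> (m + (2 * a) *\<^sub>R (x - zp))"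
    and opt_z: "0 \<le> (zt - zp) \<bullet> (G + (2 * a) *\<^sub>R zp)"
  shows "fx \<le> fz + (zt - zp) \<bullet> c
              + (zt \<bullet> G + a * (norm zt)\<^sup>2) - (zp \<bullet> G + a * (norm zp)\<^sup>2)
              + \<eta> / (2 * L) * (norm (c - m))\<^sup>2"
proof -
  have "L = \<eta> * (2 * a)" using a \<eta> by (simp add: field_simps)
  moreover have "\<eta> * (2 * a) \<le> 1 * (2 * a)" using a L \<eta> by (intro mult_right_mono) auto
  ultimately have "L / 2 \<le> a" by simp
  then have curvature: "(L / 2 - a) * (norm (x - zp))\<^sup>2 \<le> 0" by (simp add: mult_nonpos_nonneg)
  have three_point_x:
    "m \<bullet> (x - zt) \<le> a * ((norm (zt - zp))\<^sup>2 - (norm (x - zp))\<^sup>2 - (norm (zt - x))\<^sup>2)"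
    using opt_x unfolding power2_norm_eq_inner
    by (simp add: inner_simps algebra_simps inner_commute)
  have three_point_z:
    "a * (norm (zt - zp))\<^sup>2 \<le> zt \<bullet> G + a * (norm zt)\<^sup>2 - (zp \<bullet> G + a * (norm zp)\<^sup>2)"
    using opt_z unfolding power2_norm_eq_inner
    by (simp add: inner_simps algebra_simps inner_commute)
  \<comment> \<open>the prediction error is paid for by the strong convexity term \<open>a |zt - x|\<^sup>2\<close>\<close>
  have "(c - m) \<bullet> (x - zt) \<le> (\<eta> / L) / 2 * (norm (c - m))\<^sup>2 + 1 / (2 * (\<eta> / L)) * (norm (x - zt))\<^sup>2"
    using L \<eta> by (intro inner_young) simp
  then have young: "(c - m) \<bullet> (x - zt) \<le> \<eta> / (2 * L) * (norm (c - m))\<^sup>2 + a * (norm (zt - x))\<^sup>2"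
    using a by (simp add: norm_minus_commute)
  have split: "c \<bullet> (x - zp) = c \<bullet> (zt - zp) + m \<bullet> (x - zt) + (c - m) \<bullet> (x - zt)"
    by (simp add: inner_simps algebra_simps)
  show ?thesis using smooth curvature three_point_x three_point_z young split
    by (simp add: inner_commute algebra_simps)
qed

locale iftrl =
  fixes W :: "'a::real_inner set"
    and f :: "nat \<Rightarrow> 'a \<Rightarrow> real"
    and g :: "nat \<Rightarrow> 'a \<Rightarrow> 'a"
    and x z :: "nat \<Rightarrow> 'a"
    and L \<eta> :: real and T :: nat
  assumes W_convex: "convex W" and W_zero: "0 \<in> W"
    and L_pos: "L > 0"
    and eta: "0 < \<eta>" "\<eta> \<le> 1"
    and f_grad: "\<And>t y. t \<le> T \<Longrightarrow> (f t has_derivative (\<lambda>h. g t y \<bullet> h)) (at y)"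
    and g_lip: "\<And>t y y'. t \<in> {1..T} \<Longrightarrow> y \<in> W \<Longrightarrow> y' \<in> W \<Longrightarrow>
                  norm (g t y - g t y') \<le> L * norm (y - y')"
    and z_zero: "z 0 = 0"
    and x_argmin: "\<And>t. t \<in> {1..T} \<Longrightarrow>
       is_arg_min (\<lambda>y. y \<bullet> g (t - 1) (z (t - 1)) + L / (2 * \<eta>) * (norm (y - z (t - 1)))\<^sup>2)
                  (\<lambda>y. y \<in> W) (x t)"
    and z_argmin: "\<And>t. t \<in> {1..T} \<Longrightarrow>
       is_arg_min (\<lambda>y. y \<bullet> (\<Sum>\<tau>=1..t. g \<tau> (z (\<tau> - 1))) + L / (2 * \<eta>) * (norm y)\<^sup>2)
                  (\<lambda>y. y \<in> W) (z t)"
begin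

abbreviation reg :: real where "reg \<equiv> L / (2 * \<eta>)"

lemma reg_pos: "reg > 0"
  using L_pos eta by simp

definition grad_sum :: "nat \<Rightarrow> 'a" where
  "grad_sum n = (\<Sum>\<tau>=1..n. g \<tau> (z (\<tau> - 1)))"

definition objective :: "nat \<Rightarrow> 'a \<Rightarrow> real" where
  "objective n u = reg * (norm u)\<^sup>2
     + (\<Sum>t=1..n. f t (z (t - 1)) + (u - z (t - 1)) \<bullet> g t (z (t - 1)))"

lemma objective_Suc:
  "objective (Suc n) u = objective n u + f (Suc n) (z n) + (u - z n) \<bullet> g (Suc n) (z n)"
  by (simp add: objective_def)

text \<open>Up to a constant, the objective is the quadratic minimized by \<open>z n\<close>.\<close>
lemma objective_eq:
  "objective n u = u \<bullet> grad_sum n + reg * (norm u)\<^sup>2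
     + (\<Sum>t=1..n. f t (z (t - 1)) - z (t - 1) \<bullet> g t (z (t - 1)))"
  by (simp add: objective_def grad_sum_def inner_sum_right inner_diff_left
                sum.distrib sum_subtractf algebra_simps)

lemma z_in_W: "n \<le> T \<Longrightarrow> z n \<in> W"
  using z_zero W_zero z_argmin[of n] by (cases "n = 0") (auto simp: is_arg_min_def)

lemma x_in_W: "t \<in> {1..T} \<Longrightarrow> x t \<in> W"
  using x_argmin by (simp add: is_arg_min_def)

text \<open>The search point \<open>z n\<close> minimizes the FTRL quadratic (also for \<open>n = 0\<close>, where \<open>z 0 = 0\<close>).\<close>
lemma z_quadratic_min:
  assumes "n \<le> T" "y \<in> W"
  shows "z n \<bullet> grad_sum n + reg * (norm (z n))\<^sup>2 \<le> y \<bullet> grad_sum n + reg * (norm y)\<^sup>2"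
proof (cases "n = 0")
  case True
  have "0 \<le> reg * (norm y)\<^sup>2" using reg_pos by (intro mult_nonneg_nonneg) auto
  with True show ?thesis by (simp add: grad_sum_def z_zero)
next
  case False
  then have "n \<in> {1..T}" using assms by auto
  from z_argmin[OF this] assms show ?thesis
    unfolding is_arg_min_def grad_sum_def by (auto simp: not_less)
qed

lemma z_minimizes_objective: "n \<le> T \<Longrightarrow> y \<in> W \<Longrightarrow> objective n (z n) \<le> objective n y"
  using z_quadratic_min unfolding objective_eq by (simp add: add_right_mono)

lemma iftrl_step:
  assumes n: "n < T"
  shows "f (Suc n) (x (Suc n))
     \<le> objective (Suc n) (z (Suc n)) - objective n (z n)
       + \<eta> / (2 * L) * (norm (g (Suc n) (z n) - g n (z n)))\<^sup>2"
proof -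
  have Sn: "Suc n \<in> {1..T}" using n by simp
  have zn: "z n \<in> W" and zS: "z (Suc n) \<in> W" and xS: "x (Suc n) \<in> W"
    using z_in_W x_in_W[OF Sn] n by auto
  have smooth: "f (Suc n) (x (Suc n)) \<le> f (Suc n) (z n) + g (Suc n) (z n) \<bullet> (x (Suc n) - z n)
               + L / 2 * (norm (x (Suc n) - z n))\<^sup>2"
    using f_grad g_lip n by (intro smooth_descent[OF _ _ W_convex xS zn]) auto
  have opt_x: "0 \<le> (z (Suc n) - x (Suc n)) \<bullet> (g n (z n) + (2 * reg) *\<^sub>R (x (Suc n) - z n))"
    using x_argmin[OF Sn]
    by (intro quadratic_min_variational[OF W_convex xS reg_pos _ zS]) (auto simp: is_arg_min_def not_less)
  have "0 \<le> (z (Suc n) - z n) \<bullet> (grad_sum n + (2 * reg) *\<^sub>R (z n - 0))"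
    using z_quadratic_min n by (intro quadratic_min_variational[OF W_convex zn reg_pos _ zS]) auto
  then have opt_z: "0 \<le> (z (Suc n) - z n) \<bullet> (grad_sum n + (2 * reg) *\<^sub>R z n)" by simp
  from iftrl_one_step[OF L_pos eta refl smooth opt_x opt_z]
  show ?thesis unfolding objective_Suc unfolding objective_eq by simp
qed

lemma iftrl_potential_bound:
  "n \<le> T \<Longrightarrow> (\<Sum>t=1..n. f t (x t))
     \<le> objective n (z n) + (\<Sum>t<n. \<eta> / (2 * L) * (norm (g (Suc t) (z t) - g t (z t)))\<^sup>2)"
proof (induction n)
  case 0
  then show ?case by (simp add: objective_def z_zero)
next
  case (Suc n)
  then show ?case using iftrl_step[of n] by simp
qed

end

theorem mainTheorem2:
  fixes W :: "'a::euclidean_space set"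
    and f :: "nat \<Rightarrow> 'a \<Rightarrow> real"
    and g :: "nat \<Rightarrow> 'a \<Rightarrow> 'a"
    and x z :: "nat \<Rightarrow> 'a"
    and L \<eta> :: real and T :: nat
  assumes W_closed: "closed W" and W_convex: "convex W"
    and W_ball: "W \<subseteq> cball 0 1" and W_zero: "0 \<in> W"
    and L_pos: "L > 0"
    and f_convex: "\<And>t. t \<in> {1..T} \<Longrightarrow> convex_on UNIV (f t)"
    and f_grad: "\<And>t y. t \<le> T \<Longrightarrow> (f t has_derivative (\<lambda>h. g t y \<bullet> h)) (at y)"
    and g_lip: "\<And>t y y'. t \<in> {1..T} \<Longrightarrow> y \<in> W \<Longrightarrow> y' \<in> W \<Longrightarrow>
                  norm (g t y - g t y') \<le> L * norm (y - y')"
    and f_zero: "f 0 = (\<lambda>_. 0)"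
    and z_zero: "z 0 = 0"
    and eta: "0 < \<eta>" "\<eta> \<le> 1"
    and x_def: "\<And>t. t \<in> {1..T} \<Longrightarrow>
       is_arg_min (\<lambda>y. y \<bullet> g (t - 1) (z (t - 1)) + L / (2 * \<eta>) * (norm (y - z (t - 1)))\<^sup>2)
                  (\<lambda>y. y \<in> W) (x t)"
    and z_def: "\<And>t. t \<in> {1..T} \<Longrightarrow>
       is_arg_min (\<lambda>y. y \<bullet> (\<Sum>\<tau>=1..t. g \<tau> (z (\<tau> - 1))) + L / (2 * \<eta>) * (norm y)\<^sup>2)
                  (\<lambda>y. y \<in> W) (z t)"
  shows "(\<Sum>t=1..T. f t (x t))
     \<le> (INF u\<in>W. L / (2 * \<eta>) * (norm u)\<^sup>2
            + (\<Sum>t=1..T. f t (z (t - 1)) + (u - z (t - 1)) \<bullet> g t (z (t - 1))))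
       + \<eta> / (2 * L) * (\<Sum>t=0..<T. (norm (g (t + 1) (z t) - g t (z t)))\<^sup>2)"
proof -
  interpret iftrl W f g x z L \<eta> T
    using assms by unfold_locales auto
  have "objective T (z T) \<le> (INF u\<in>W. objective T u)"
    using W_zero z_minimizes_objective by (intro cINF_greatest) auto
  moreover have "(\<Sum>t<T. \<eta> / (2 * L) * (norm (g (Suc t) (z t) - g t (z t)))\<^sup>2)
      = \<eta> / (2 * L) * (\<Sum>t=0..<T. (norm (g (t + 1) (z t) - g t (z t)))\<^sup>2)"
    by (simp add: sum_distrib_left atLeast0LessThan)
  ultimately show ?thesis
    using iftrl_potential_bound[of T] unfolding objective_def by simp
qed

end
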